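(* Let $\mathfrak{X}=(X,\{R_i\}_{i=0}^{d+1})$ be a commutative association scheme with $R_d^\top=R_{d+1}$ and $R_i^\top=R_i$ for $0\le i\le d-1$, whose symmetrization $\tilde{\mathfrak X}=(X,\{\tilde R_i\}_{i=0}^d)$ ($\tilde R_i=R_i$ for $i\le d-1$, $\tilde R_d=R_d\cup R_{d+1}$) is amorphic, with primitive idempotents $\tilde E_0,\dots,\tilde E_d$ numbered so that, with $k_i$ the valency of $\tilde R_i$, the adjacency matrix $\tilde A_i$ of $\tilde R_i$ satisfies $\tilde A_i\tilde E_0=k_i\tilde E_0$, $\tilde A_i\tilde E_i=b_i\tilde E_i$, and $\tilde A_i\tilde E_j=a_i\tilde E_j$ for $1\le j\le d$, $j\neq i$, with $a_i\ne b_i$ ($1\le i\le d$). Let $d\geq3$. If $1\leq i<j\leq d$, then $a_i+b_j=a_j+b_i$.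
   Context: Association scheme: finite set $X$ with a partition of $X\times X$ into relations $R_0$ (diagonal), $R_1,\dots$, closed under transposition, with constant intersection numbers; commutative if these are symmetric in the two lower indices. Adjacency matrices are the $01$-matrices of the relations; primitive idempotents $E_0=J/|X|,\dots$ form a basis of the Bose–Mesner algebra with $A_iE_j$ a scalar multiple of $E_j$. A symmetric scheme is amorphic if merging the nondiagonal relations along any partition of their index set into nonempty parts gives an association scheme. *)

theory Defs
  imports "HOL-Analysis.Analysis"
begin

text \<open>The point set X is the whole finite type 'a (any finite set is in bijection with such a type).
Relations are indexed by 0..n (n classes). Matrices are real X-by-X matrices.\<close>

definition intersection_count :: "(nat \<Rightarrow> ('a::finite \<times> 'a) set) \<Rightarrow> nat \<Rightarrow> nat \<Rightarrow> 'a \<Rightarrow> 'a \<Rightarrow> nat" where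
  "intersection_count R i j x y = card {z. (x, z) \<in> R i \<and> (z, y) \<in> R j}"

definition assoc_scheme :: "nat \<Rightarrow> (nat \<Rightarrow> ('a::finite \<times> 'a) set) \<Rightarrow> bool" where
  "assoc_scheme n R \<longleftrightarrow>
     R 0 = Id \<and>
     (\<forall>i\<le>n. R i \<noteq> {}) \<and>
     (\<forall>i\<le>n. \<forall>j\<le>n. i \<noteq> j \<longrightarrow> R i \<inter> R j = {}) \<and>
     (\<Union>i\<le>n. R i) = UNIV \<and>
     (\<forall>i\<le>n. \<exists>j\<le>n. (R i)\<inverse> = R j) \<and>
     (\<forall>i\<le>n. \<forall>j\<le>n. \<forall>k\<le>n. \<exists>p. \<forall>x y. (x, y) \<in> R k \<longrightarrow> intersection_count R i j x y = p)"

definition comm_assoc_scheme :: "nat \<Rightarrow> (nat \<Rightarrow> ('a::finite \<times> 'a) set) \<Rightarrow> bool" where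
  "comm_assoc_scheme n R \<longleftrightarrow> assoc_scheme n R \<and>
     (\<forall>i\<le>n. \<forall>j\<le>n. \<forall>x y. intersection_count R i j x y = intersection_count R j i x y)"

definition symmetric_scheme :: "nat \<Rightarrow> (nat \<Rightarrow> ('a::finite \<times> 'a) set) \<Rightarrow> bool" where
  "symmetric_scheme n R \<longleftrightarrow> assoc_scheme n R \<and> (\<forall>i\<le>n. (R i)\<inverse> = R i)"

text \<open>Merging the nondiagonal relations 1..n along the partition given by the fibres of a
surjection f from {1..n} onto {1..m}.\<close>
definition merge_scheme :: "(nat \<Rightarrow> ('a \<times> 'a) set) \<Rightarrow> nat \<Rightarrow> (nat \<Rightarrow> nat) \<Rightarrow> nat \<Rightarrow> ('a \<times> 'a) set" where
  "merge_scheme R n f l = (if l = 0 then R 0 else (\<Union>i\<in>{i\<in>{1..n}. f i = l}. R i))"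

definition amorphic :: "nat \<Rightarrow> (nat \<Rightarrow> ('a::finite \<times> 'a) set) \<Rightarrow> bool" where
  "amorphic n R \<longleftrightarrow> symmetric_scheme n R \<and>
     (\<forall>m f. f ` {1..n} = {1..m} \<longrightarrow> assoc_scheme m (merge_scheme R n f))"

definition symmetrization :: "(nat \<Rightarrow> ('a \<times> 'a) set) \<Rightarrow> nat \<Rightarrow> nat \<Rightarrow> ('a \<times> 'a) set" where
  "symmetrization R d l = (if l = d then R d \<union> R (d + 1) else R l)"

definition adj_matrix :: "('a::finite \<times> 'a) set \<Rightarrow> real^'a^'a" where
  "adj_matrix S = (\<chi> x y. if (x, y) \<in> S then 1 else 0)"

definition all_ones :: "real^'a::finite^'a" where
  "all_ones = (\<chi> x y. 1)"

definition bose_mesner :: "nat \<Rightarrow> (nat \<Rightarrow> ('a::finite \<times> 'a) set) \<Rightarrow> (real^'a^'a) set" where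
  "bose_mesner n R = span ((\<lambda>i. adj_matrix (R i)) ` {..n})"

definition primitive_idempotents :: "nat \<Rightarrow> (nat \<Rightarrow> ('a::finite \<times> 'a) set) \<Rightarrow> (nat \<Rightarrow> real^'a^'a) \<Rightarrow> bool" where
  "primitive_idempotents n R E \<longleftrightarrow>
     (\<forall>j\<le>n. E j \<in> bose_mesner n R) \<and>
     span (E ` {..n}) = bose_mesner n R \<and>
     (\<forall>j\<le>n. E j \<noteq> 0) \<and>
     (\<forall>j\<le>n. \<forall>k\<le>n. E j ** E k = (if j = k then E j else 0)) \<and>
     E 0 = (1 / real CARD('a)) *\<^sub>R all_ones"

end

theory Submission
  imports Defs
begin

(* The adjacency matrices of the symmetrized scheme sum to the all-ones matrix J, and
   J = |X| E_0 annihilates every E_m with m >= 1. Applying this sum to E_m shows that the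
   eigenvalues of A_0 = I, A_1, ..., A_d on E_m add up to zero, i.e.
   1 + a_1 + ... + a_d + (b_m - a_m) = 0. Hence b_m - a_m does not depend on m. *)

lemma matrix_mul_sum_left:
  fixes A :: "'i \<Rightarrow> 'r::semiring_1^'n::finite^'m::finite" and C :: "'r^'p::finite^'n"
  shows "(\<Sum>l\<in>I. A l) ** C = (\<Sum>l\<in>I. A l ** C)"
  by (simp add: matrix_matrix_mult_def vec_eq_iff sum_distrib_right sum_component
      sum.swap[of _ I])

lemma adj_matrix_Id: "adj_matrix Id = mat 1"
  by (simp add: adj_matrix_def mat_def vec_eq_iff)

lemma sum_if_eq_point:
  fixes x y :: "'i \<Rightarrow> 'r::ab_group_add"
  assumes "finite A" "m \<in> A"
  shows "(\<Sum>l\<in>A. if l = m then y l else x l) = (\<Sum>l\<in>A. x l) + (y m - x m)"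
proof -
  have "(\<Sum>l\<in>A. if l = m then y l else x l) = (\<Sum>l\<in>A. x l + (if l = m then y l - x l else 0))"
    by (rule sum.cong) auto
  then show ?thesis
    using assms by (simp add: sum.distrib)
qed

lemma assoc_scheme_sum_adj_matrix:
  assumes "assoc_scheme n R"
  shows "(\<Sum>l\<le>n. adj_matrix (R l)) = all_ones"
proof -
  have disjoint: "\<And>l l'. l \<le> n \<Longrightarrow> l' \<le> n \<Longrightarrow> l \<noteq> l' \<Longrightarrow> R l \<inter> R l' = {}"
    and cover: "(\<Union>l\<le>n. R l) = UNIV"
    using assms unfolding assoc_scheme_def by auto
  have "(\<Sum>l\<le>n. if (x, y) \<in> R l then 1 else 0) = (1::real)" for x y
  proof -
    obtain l0 where l0: "l0 \<le> n" "(x, y) \<in> R l0"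
      using cover by blast
    have "(\<Sum>l\<le>n. if (x, y) \<in> R l then 1 else 0) = (\<Sum>l\<le>n. if l = l0 then 1 else (0::real))"
      using disjoint l0 by (intro sum.cong) auto
    then show ?thesis
      using l0(1) by simp
  qed
  then show ?thesis
    by (simp add: vec_eq_iff adj_matrix_def all_ones_def sum_component)
qed

lemma primitive_idempotents_all_ones_mult:
  assumes "primitive_idempotents n R E" "1 \<le> m" "m \<le> n"
  shows "all_ones ** E m = 0"
proof -
  have J: "all_ones = real CARD('a) *\<^sub>R E 0" and orth: "E 0 ** E m = 0"
    using assms unfolding primitive_idempotents_def by auto
  have "all_ones ** E m = real CARD('a) *\<^sub>R (E 0 ** E m)"
    unfolding J by (rule scalar_matrix_assoc[symmetric])
  then show ?thesis
    using orth by simp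
qed

lemma assoc_scheme_eigenvalue_sum:
  fixes \<theta> :: "nat \<Rightarrow> real"
  assumes "assoc_scheme n R" "primitive_idempotents n R E" "1 \<le> m" "m \<le> n"
    and eigen: "\<forall>l\<in>{1..n}. adj_matrix (R l) ** E m = \<theta> l *\<^sub>R E m"
  shows "1 + (\<Sum>l\<in>{1..n}. \<theta> l) = 0"
proof -
  have R0: "R 0 = Id"
    using assms(1) unfolding assoc_scheme_def by blast
  have "0 = (\<Sum>l\<le>n. adj_matrix (R l)) ** E m"
    using primitive_idempotents_all_ones_mult[OF assms(2-4)]
      assoc_scheme_sum_adj_matrix[OF assms(1)] by simp
  also have "\<dots> = (\<Sum>l\<le>n. adj_matrix (R l) ** E m)"
    by (rule matrix_mul_sum_left)
  also have "\<dots> = E m + (\<Sum>l\<in>{1..n}. adj_matrix (R l) ** E m)"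
  proof -
    have "{..n} = insert 0 {1..n}" by auto
    then show ?thesis
      by (simp add: R0 adj_matrix_Id)
  qed
  also have "\<dots> = (1 + (\<Sum>l\<in>{1..n}. \<theta> l)) *\<^sub>R E m"
    using eigen by (simp add: scaleR_add_left scaleR_sum_left)
  finally have "(1 + (\<Sum>l\<in>{1..n}. \<theta> l)) *\<^sub>R E m = 0" ..
  moreover have "E m \<noteq> 0"
    using assms(2,4) unfolding primitive_idempotents_def by blast
  ultimately show ?thesis
    by simp
qed

theorem lemma3p2:
  fixes R :: "nat \<Rightarrow> ('a::finite \<times> 'a) set"
    and d :: nat
    and E :: "nat \<Rightarrow> real^'a^'a"
    and k a b :: "nat \<Rightarrow> real"
    and i j :: nat
  assumes "comm_assoc_scheme (d + 1) R"
    and "(R d)\<inverse> = R (d + 1)"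
    and "\<forall>l<d. (R l)\<inverse> = R l"
    and "amorphic d (symmetrization R d)"
    and "primitive_idempotents d (symmetrization R d) E"
    and "\<forall>l\<in>{1..d}. \<forall>x. k l = real (card {y. (x, y) \<in> symmetrization R d l})"
    and "\<forall>l\<in>{1..d}. adj_matrix (symmetrization R d l) ** E 0 = k l *\<^sub>R E 0"
    and "\<forall>l\<in>{1..d}. adj_matrix (symmetrization R d l) ** E l = b l *\<^sub>R E l"
    and "\<forall>l\<in>{1..d}. \<forall>m\<in>{1..d}. m \<noteq> l \<longrightarrow>
           adj_matrix (symmetrization R d l) ** E m = a l *\<^sub>R E m"
    and "\<forall>l\<in>{1..d}. a l \<noteq> b l"
    and "d \<ge> 3"
    and "1 \<le> i" and "i < j" and "j \<le> d"
  shows "a i + b j = a j + b i"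
proof -
  have scheme: "assoc_scheme d (symmetrization R d)"
    using assms(4) unfolding amorphic_def symmetric_scheme_def by blast
  have gap: "b m - a m = -1 - (\<Sum>l\<in>{1..d}. a l)" if "1 \<le> m" "m \<le> d" for m
  proof -
    have "\<forall>l\<in>{1..d}. adj_matrix (symmetrization R d l) ** E m
            = (if l = m then b l else a l) *\<^sub>R E m"
      using assms(8,9) that by auto
    then have "1 + (\<Sum>l\<in>{1..d}. if l = m then b l else a l) = 0"
      by (rule assoc_scheme_eigenvalue_sum[OF scheme assms(5) that])
    then show ?thesis
      using sum_if_eq_point[of "{1..d}" m b a] that by simp
  qed
  show ?thesis
    using gap[of i] gap[of j] assms(12-14) by linarith
qed

end
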